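(* Let $\Sigma=\{1,\dots,q\}^{\mathbb N}$ with shift $\sigma$ and $\psi:\Sigma\to\mathbb R$ continuous. If $\lim_{n\to\infty}\frac1n\|\xi_n\|_\infty=0$, then every conformal measure for $\psi$ is a weak Gibbs measure for $\psi$, and $\psi$ is of weak bounded variation.
   Context: $\mathcal L_\psi\phi(\underline x)=\sum_{\underline y\in\sigma^{-1}\underline x}e^{\psi(\underline y)}\phi(\underline y)$; a conformal measure is a finite positive measure $\mu$ with $\mathcal L_\psi^*\mu=r(\mathcal L_\psi)\mu$, where $r$ is the spectral radius and $(\mathcal L_\psi^*\mu)(\phi)=\int\mathcal L_\psi\phi\,d\mu$. Cylinders $[a_0\dots a_{n-1}]$, $\mathcal C_n$ the set of cylinders of length $n$, $\psi^n=\sum_{i<n}\psi\circ\sigma^i$, $\xi_n(\underline x)=\sup_{\underline y\in[x_0\dots x_{n-1}]}\sum_{i=0}^{n-1}|\psi(\sigma^i\underline x)-\psi(\sigma^i\underline y)|$. $\mu$ is a weak Gibbs measure for $\psi$ if there are a constant $P$ and positive numbers $K_n$ with $\lim_n\frac{\log K_n}{n}=0$ such that for all $n$, $\underline x$ and $\underline y\in[x_0\dots x_{n-1}]$: $K_n^{-1}\le\mu([x_0\dots x_{n-1}])e^{-\psi^n(\underline y)+nP}\le K_n$. $\psi$ is of weak bounded variation if there are positive $K_n$ with $\lim_n\frac{\log K_n}n=0$ and $\sup_{C\in\mathcal C_n}\sup_{\underline y,\underline w\in C}e^{\psi^n(\underline y)-\psi^n(\underline w)}\le K_n$ for all $n$.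 *)

theory Defs
  imports "HOL-Analysis.Analysis" "HOL-Probability.Probability"
begin

text \<open>The full shift on q symbols: Sigma = {1..q}^N, represented as a subset of
  nat => nat with the product topology (nat discrete).\<close>
definition Sig :: "nat \<Rightarrow> (nat \<Rightarrow> nat) set" where
  "Sig q = {x. \<forall>i. x i \<in> {1..q}}"

definition shift :: "(nat \<Rightarrow> nat) \<Rightarrow> (nat \<Rightarrow> nat)" where
  "shift x = (\<lambda>i. x (Suc i))"

definition birk :: "((nat \<Rightarrow> nat) \<Rightarrow> real) \<Rightarrow> nat \<Rightarrow> (nat \<Rightarrow> nat) \<Rightarrow> real" where
  "birk psi n y = (\<Sum>i<n. psi ((shift ^^ i) y))"

definition cyl :: "nat \<Rightarrow> nat \<Rightarrow> (nat \<Rightarrow> nat) \<Rightarrow> (nat \<Rightarrow> nat) set" where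
  "cyl q n x = {y \<in> Sig q. \<forall>i<n. y i = x i}"

definition cylinders :: "nat \<Rightarrow> nat \<Rightarrow> (nat \<Rightarrow> nat) set set" where
  "cylinders q n = {cyl q n x | x. x \<in> Sig q}"

definition transfer :: "nat \<Rightarrow> ((nat \<Rightarrow> nat) \<Rightarrow> real) \<Rightarrow> ((nat \<Rightarrow> nat) \<Rightarrow> real) \<Rightarrow> (nat \<Rightarrow> nat) \<Rightarrow> real" where
  "transfer q psi phi x = (\<Sum>y\<in>{y \<in> Sig q. shift y = x}. exp (psi y) * phi y)"

definition transfer_opnorm :: "nat \<Rightarrow> ((nat \<Rightarrow> nat) \<Rightarrow> real) \<Rightarrow> nat \<Rightarrow> real" where
  "transfer_opnorm q psi n =
     (SUP phi \<in> {phi. continuous_on (Sig q) phi \<and> (\<forall>x\<in>Sig q. \<bar>phi x\<bar> \<le> 1)}.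
        (SUP x \<in> Sig q. \<bar>((transfer q psi) ^^ n) phi x\<bar>))"

text \<open>Spectral radius via Gelfand's formula r(L) = lim ||L^n||^(1/n).\<close>
definition spectral_radius_transfer :: "nat \<Rightarrow> ((nat \<Rightarrow> nat) \<Rightarrow> real) \<Rightarrow> real" where
  "spectral_radius_transfer q psi = lim (\<lambda>n. transfer_opnorm q psi n powr (1 / real n))"

definition finite_pos_measure_on :: "nat \<Rightarrow> (nat \<Rightarrow> nat) measure \<Rightarrow> bool" where
  "finite_pos_measure_on q \<mu> \<longleftrightarrow>
     space \<mu> = Sig q \<and> sets \<mu> = sets (restrict_space borel (Sig q)) \<and>
     finite_measure \<mu> \<and> emeasure \<mu> (Sig q) > 0"

definition conformal :: "nat \<Rightarrow> ((nat \<Rightarrow> nat) \<Rightarrow> real) \<Rightarrow> (nat \<Rightarrow> nat) measure \<Rightarrow> bool" where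
  "conformal q psi \<mu> \<longleftrightarrow> finite_pos_measure_on q \<mu> \<and>
     (\<forall>phi. continuous_on (Sig q) phi \<longrightarrow>
        (\<integral>x. transfer q psi phi x \<partial>\<mu>) = spectral_radius_transfer q psi * (\<integral>x. phi x \<partial>\<mu>))"

definition xi :: "nat \<Rightarrow> ((nat \<Rightarrow> nat) \<Rightarrow> real) \<Rightarrow> nat \<Rightarrow> (nat \<Rightarrow> nat) \<Rightarrow> real" where
  "xi q psi n x = (SUP y \<in> cyl q n x. \<Sum>i<n. \<bar>psi ((shift ^^ i) x) - psi ((shift ^^ i) y)\<bar>)"

definition xi_supnorm :: "nat \<Rightarrow> ((nat \<Rightarrow> nat) \<Rightarrow> real) \<Rightarrow> nat \<Rightarrow> real" where
  "xi_supnorm q psi n = (SUP x \<in> Sig q. \<bar>xi q psi n x\<bar>)"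

definition weak_gibbs :: "nat \<Rightarrow> ((nat \<Rightarrow> nat) \<Rightarrow> real) \<Rightarrow> (nat \<Rightarrow> nat) measure \<Rightarrow> bool" where
  "weak_gibbs q psi \<mu> \<longleftrightarrow> (\<exists>(P::real) (K::nat \<Rightarrow> real). (\<forall>n. K n > 0) \<and>
     (\<lambda>n. ln (K n) / real n) \<longlonglongrightarrow> 0 \<and>
     (\<forall>n x y. x \<in> Sig q \<longrightarrow> y \<in> cyl q n x \<longrightarrow>
        1 / K n \<le> measure \<mu> (cyl q n x) * exp (- birk psi n y + real n * P) \<and>
        measure \<mu> (cyl q n x) * exp (- birk psi n y + real n * P) \<le> K n))"

definition weak_bounded_variation :: "nat \<Rightarrow> ((nat \<Rightarrow> nat) \<Rightarrow> real) \<Rightarrow> bool" where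
  "weak_bounded_variation q psi \<longleftrightarrow> (\<exists>K::nat \<Rightarrow> real. (\<forall>n. K n > 0) \<and>
     (\<lambda>n. ln (K n) / real n) \<longlonglongrightarrow> 0 \<and>
     (\<forall>n. \<forall>C \<in> cylinders q n. \<forall>y\<in>C. \<forall>w\<in>C. exp (birk psi n y - birk psi n w) \<le> K n))"

end

theory Submission
  imports Defs
begin

text \<open>Testing the conformality relation, iterated to \<open>\<integral> L\<^sup>n\<phi> d\<mu> = r\<^sup>n \<integral> \<phi> d\<mu>\<close>, against
  the indicator of an \<open>n\<close>-cylinder \<open>[w]\<close> (continuous, as cylinders are clopen) gives
  \<open>r\<^sup>n \<mu>[w] = \<integral> exp (\<psi>\<^sup>n (w x)) d\<mu>(x)\<close>, where \<open>w x\<close> is the sequence \<open>x\<close> with the word \<open>w\<close>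
  prepended. All points \<open>w x\<close> lie in \<open>[w]\<close>, so \<open>\<psi>\<^sup>n (w x)\<close> differs from \<open>\<psi>\<^sup>n y\<close>, for any
  \<open>y \<in> [w]\<close>, by at most \<open>\<parallel>\<xi>\<^sub>n\<parallel>\<^sub>\<infinity>\<close>. Hence \<open>r\<^sup>n \<mu>[w]\<close> equals \<open>\<mu>(\<Sigma>) exp (\<psi>\<^sup>n y)\<close> up to a factor
  \<open>exp (\<plusminus>\<parallel>\<xi>\<^sub>n\<parallel>\<^sub>\<infinity>)\<close>, which is subexponential: this is the weak Gibbs property with
  \<open>P = log r\<close>. The same bound on Birkhoff sums over a cylinder is weak bounded variation.\<close>

abbreviation words :: "nat \<Rightarrow> nat \<Rightarrow> nat list set" where
  "words q n \<equiv> {w. set w \<subseteq> {1..q} \<and> length w = n}"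

definition prepend :: "nat list \<Rightarrow> (nat \<Rightarrow> nat) \<Rightarrow> nat \<Rightarrow> nat" where
  "prepend w x = (\<lambda>i. if i < length w then w ! i else x (i - length w))"

lemma prepend_Nil [simp]: "prepend [] x = x"
  by (simp add: prepend_def)

lemma prepend_prepend [simp]: "prepend u (prepend v x) = prepend (u @ v) x"
  by (auto simp: prepend_def fun_eq_iff nth_append)

lemma shift_prepend_Cons [simp]: "shift (prepend (a # w) x) = prepend w x"
  by (simp add: shift_def prepend_def fun_eq_iff)

lemma prepend_in_Sig: "set w \<subseteq> {1..q} \<Longrightarrow> x \<in> Sig q \<Longrightarrow> prepend w x \<in> Sig q"
  unfolding Sig_def prepend_def using nth_mem by fastforce

lemma funpow_shift_in_Sig: "x \<in> Sig q \<Longrightarrow> (shift ^^ i) x \<in> Sig q"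
  by (induction i) (auto simp: Sig_def shift_def)

lemma continuous_on_prepend: "continuous_on S (prepend w)"
proof (rule continuous_on_coordinatewise_then_product)
  fix i
  show "continuous_on S (\<lambda>x. prepend w x i)"
  proof (cases "i < length w")
    case False
    then show ?thesis
      unfolding prepend_def
      by (simp add: continuous_on_subset[OF continuous_on_product_coordinates])
  qed (simp add: prepend_def)
qed

lemma shift_preimage_Sig:
  assumes "x \<in> Sig q"
  shows "{y \<in> Sig q. shift y = x} = (\<lambda>a. prepend [a] x) ` {1..q}"
proof (intro equalityI subsetI)
  fix y assume y: "y \<in> {y \<in> Sig q. shift y = x}"
  have "y = prepend [y 0] (shift y)"
  proof
    show "y i = prepend [y 0] (shift y) i" for i
      by (cases i) (simp_all add: shift_def prepend_def)
  qed
  with y have "y = prepend [y 0] x"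
    by simp
  moreover have "y 0 \<in> {1..q}"
    using y by (simp add: Sig_def)
  ultimately show "y \<in> (\<lambda>a. prepend [a] x) ` {1..q}"
    by (rule image_eqI)
next
  fix y assume "y \<in> (\<lambda>a. prepend [a] x) ` {1..q}"
  then obtain a where "a \<in> {1..q}" and "y = prepend [a] x"
    by blast
  then show "y \<in> {y \<in> Sig q. shift y = x}"
    using assms prepend_in_Sig[of "[a]" q x] by simp
qed

lemma transfer_eq_sum:
  assumes "x \<in> Sig q"
  shows "transfer q psi phi x = (\<Sum>a\<in>{1..q}. exp (psi (prepend [a] x)) * phi (prepend [a] x))"
proof -
  have "inj_on (\<lambda>a. prepend [a] x) {1..q}"
  proof (rule inj_onI)
    fix a b assume "prepend [a] x = prepend [b] x"
    then have "prepend [a] x 0 = prepend [b] x 0"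
      by simp
    then show "a = b"
      by (simp add: prepend_def)
  qed
  then show ?thesis
    unfolding transfer_def shift_preimage_Sig[OF assms] by (simp add: sum.reindex)
qed

lemma birk_Suc: "birk psi (Suc n) y = psi y + birk psi n (shift y)"
  unfolding birk_def sum.lessThan_Suc_shift by (simp add: funpow_Suc_right del: funpow.simps)

lemma transfer_iterate_eq_sum:
  assumes "x \<in> Sig q"
  shows "((transfer q psi) ^^ n) phi x =
    (\<Sum>w\<in>words q n. exp (birk psi n (prepend w x)) * phi (prepend w x))"
proof (induction n arbitrary: phi)
  case 0
  have "words q 0 = {[]}" by auto
  then show ?case by (simp add: birk_def)
next
  case (Suc n)
  let ?F = "\<lambda>v. exp (birk psi (Suc n) (prepend v x)) * phi (prepend v x)"
  have "((transfer q psi) ^^ Suc n) phi x = ((transfer q psi) ^^ n) (transfer q psi phi) x"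
    by (simp add: funpow_Suc_right del: funpow.simps)
  also have "\<dots> = (\<Sum>w\<in>words q n. exp (birk psi n (prepend w x)) * transfer q psi phi (prepend w x))"
    by (rule Suc)
  also have "\<dots> = (\<Sum>w\<in>words q n. \<Sum>a\<in>{1..q}. ?F (a # w))"
  proof (rule sum.cong[OF refl])
    fix w assume "w \<in> words q n"
    then have "prepend w x \<in> Sig q"
      using assms prepend_in_Sig by blast
    then show "exp (birk psi n (prepend w x)) * transfer q psi phi (prepend w x) =
        (\<Sum>a\<in>{1..q}. ?F (a # w))"
      by (simp add: transfer_eq_sum sum_distrib_left birk_Suc exp_add algebra_simps)
  qed
  also have "\<dots> = (\<Sum>(w, a)\<in>words q n \<times> {1..q}. ?F (a # w))"
    by (simp add: sum.cartesian_product)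
  also have "\<dots> = sum ?F ((\<lambda>(w, a). a # w) ` (words q n \<times> {1..q}))"
    by (subst sum.reindex) (auto simp: inj_on_def case_prod_beta)
  also have "\<dots> = sum ?F (words q (Suc n))"
    by (simp only: lists_length_Suc_eq)
  finally show ?case .
qed

lemma continuous_on_transfer:
  assumes "continuous_on (Sig q) psi" and "continuous_on (Sig q) phi"
  shows "continuous_on (Sig q) (transfer q psi phi)"
proof -
  have prepend_comp: "continuous_on (Sig q) (\<lambda>x. f (prepend [a] x))"
    if "a \<in> {1..q}" and "continuous_on (Sig q) f" for f a
    using that prepend_in_Sig[of "[a]"]
    by (intro continuous_on_compose2[OF that(2) continuous_on_prepend]) auto
  have "continuous_on (Sig q) (\<lambda>x. \<Sum>a\<in>{1..q}. exp (psi (prepend [a] x)) * phi (prepend [a] x))"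
    by (intro continuous_on_sum continuous_on_mult continuous_on_exp prepend_comp assms) auto
  then show ?thesis
    by (rule continuous_on_cong[THEN iffD1, rotated 2]) (auto simp: transfer_eq_sum)
qed

lemma continuous_on_transfer_iterate:
  assumes "continuous_on (Sig q) psi" and "continuous_on (Sig q) phi"
  shows "continuous_on (Sig q) (((transfer q psi) ^^ n) phi)"
  using assms(2) by (induction n) (auto simp: continuous_on_transfer[OF assms(1)])

lemma conformal_integral_transfer_iterate:
  assumes "conformal q psi \<mu>" and "continuous_on (Sig q) psi" and "continuous_on (Sig q) phi"
  shows "(\<integral>x. ((transfer q psi) ^^ n) phi x \<partial>\<mu>) =
    spectral_radius_transfer q psi ^ n * (\<integral>x. phi x \<partial>\<mu>)"
  using assms(3)
proof (induction n arbitrary: phi)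
  case (Suc n)
  have "(\<integral>x. ((transfer q psi) ^^ Suc n) phi x \<partial>\<mu>) =
      (\<integral>x. ((transfer q psi) ^^ n) (transfer q psi phi) x \<partial>\<mu>)"
    by (simp add: funpow_Suc_right del: funpow.simps)
  also have "\<dots> = spectral_radius_transfer q psi ^ n * (\<integral>x. transfer q psi phi x \<partial>\<mu>)"
    using Suc continuous_on_transfer[OF assms(2)] by blast
  also have "\<dots> = spectral_radius_transfer q psi ^ Suc n * (\<integral>x. phi x \<partial>\<mu>)"
    using assms(1) Suc.prems by (simp add: conformal_def)
  finally show ?case .
qed simp

lemma compact_Sig: "compact (Sig q)"
proof -
  have "Sig q = PiE UNIV (\<lambda>_. {1..q})"
    by (auto simp: Sig_def PiE_def)
  moreover have "compactin (product_topology (\<lambda>_. euclidean) UNIV) (PiE UNIV (\<lambda>_. {1..q}))"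
    by (simp add: compactin_PiE finite_imp_compact)
  ultimately show ?thesis
    by (metis compactin_euclidean_iff euclidean_product_topology)
qed

lemma continuous_on_Sig_bounded:
  fixes f :: "(nat \<Rightarrow> nat) \<Rightarrow> real"
  assumes "continuous_on (Sig q) f"
  obtains M where "\<And>x. x \<in> Sig q \<Longrightarrow> \<bar>f x\<bar> \<le> M"
  using compact_imp_bounded[OF compact_continuous_image[OF assms compact_Sig]]
  by (auto simp: bounded_iff)

lemma integrable_continuous_on_Sig:
  fixes f :: "(nat \<Rightarrow> nat) \<Rightarrow> real"
  assumes "finite_pos_measure_on q \<mu>" and "continuous_on (Sig q) f"
  shows "integrable \<mu> f"
proof -
  obtain M where M: "\<And>x. x \<in> Sig q \<Longrightarrow> \<bar>f x\<bar> \<le> M"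
    using continuous_on_Sig_bounded[OF assms(2)] by blast
  have space: "space \<mu> = Sig q" and "finite_measure \<mu>"
    and sets: "sets \<mu> = sets (restrict_space borel (Sig q))"
    using assms(1) by (simp_all add: finite_pos_measure_on_def)
  have "f \<in> borel_measurable \<mu>"
    by (subst measurable_cong_sets[OF sets refl])
      (rule borel_measurable_continuous_on_restrict[OF assms(2)])
  then show ?thesis
    by (rule finite_measure.integrable_const_bound[OF \<open>finite_measure \<mu>\<close>, of _ M, rotated])
      (rule AE_I2, use M space in auto)
qed

lemma variation_sum_le:
  assumes "\<And>x. x \<in> Sig q \<Longrightarrow> \<bar>psi x\<bar> \<le> M" and "x \<in> Sig q" and "y \<in> Sig q"
  shows "(\<Sum>i<n. \<bar>psi ((shift ^^ i) x) - psi ((shift ^^ i) y)\<bar>) \<le> 2 * real n * M"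
proof -
  have "(\<Sum>i<n. \<bar>psi ((shift ^^ i) x) - psi ((shift ^^ i) y)\<bar>) \<le> (\<Sum>i<n. 2 * M)"
  proof (rule sum_mono)
    fix i
    have "\<bar>psi ((shift ^^ i) x)\<bar> \<le> M" and "\<bar>psi ((shift ^^ i) y)\<bar> \<le> M"
      using assms funpow_shift_in_Sig by auto
    then show "\<bar>psi ((shift ^^ i) x) - psi ((shift ^^ i) y)\<bar> \<le> 2 * M" by linarith
  qed
  then show ?thesis by simp
qed

lemma
  assumes "\<And>x. x \<in> Sig q \<Longrightarrow> \<bar>psi x\<bar> \<le> M" and "x \<in> Sig q"
  shows bdd_above_variation_cyl:
      "bdd_above ((\<lambda>y. \<Sum>i<n. \<bar>psi ((shift ^^ i) x) - psi ((shift ^^ i) y)\<bar>) ` cyl q n x)"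
    and xi_nonneg: "0 \<le> xi q psi n x"
    and xi_le: "xi q psi n x \<le> 2 * real n * M"
proof -
  have bound: "(\<Sum>i<n. \<bar>psi ((shift ^^ i) x) - psi ((shift ^^ i) y)\<bar>) \<le> 2 * real n * M"
    if "y \<in> cyl q n x" for y
    using variation_sum_le[OF assms(1,2), where y = y and n = n] that by (simp add: cyl_def)
  then show bdd: "bdd_above ((\<lambda>y. \<Sum>i<n. \<bar>psi ((shift ^^ i) x) - psi ((shift ^^ i) y)\<bar>) ` cyl q n x)"
    by (intro bdd_aboveI2) blast
  have x_in_cyl: "x \<in> cyl q n x"
    using assms(2) by (simp add: cyl_def)
  have "(\<Sum>i<n. \<bar>psi ((shift ^^ i) x) - psi ((shift ^^ i) x)\<bar>) \<le> xi q psi n x"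
    unfolding xi_def by (rule cSUP_upper[OF x_in_cyl bdd])
  then show "0 \<le> xi q psi n x" by simp
  show "xi q psi n x \<le> 2 * real n * M"
    unfolding xi_def using x_in_cyl bound by (intro cSUP_least) auto
qed

lemma birk_diff_le_xi_supnorm:
  assumes "continuous_on (Sig q) psi" and "y \<in> Sig q" and "w \<in> cyl q n y"
  shows "\<bar>birk psi n y - birk psi n w\<bar> \<le> xi_supnorm q psi n"
proof -
  obtain M where M: "\<And>x. x \<in> Sig q \<Longrightarrow> \<bar>psi x\<bar> \<le> M"
    using continuous_on_Sig_bounded[OF assms(1)] by blast
  have "bdd_above ((\<lambda>x. \<bar>xi q psi n x\<bar>) ` Sig q)"
    using xi_nonneg[OF M] xi_le[OF M] by (intro bdd_aboveI2[of _ _ "2 * real n * M"]) force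
  then have xi_le_supnorm: "\<bar>xi q psi n y\<bar> \<le> xi_supnorm q psi n"
    unfolding xi_supnorm_def by (rule cSUP_upper[OF assms(2)])
  have "\<bar>birk psi n y - birk psi n w\<bar> \<le> (\<Sum>i<n. \<bar>psi ((shift ^^ i) y) - psi ((shift ^^ i) w)\<bar>)"
    unfolding birk_def sum_subtractf[symmetric] by (rule sum_abs)
  also have "\<dots> \<le> xi q psi n y"
    unfolding xi_def by (rule cSUP_upper[OF assms(3) bdd_above_variation_cyl[OF M assms(2)]])
  finally show ?thesis
    using xi_le_supnorm by linarith
qed

lemma weak_bounded_variation_if_xi_supnorm_sublinear:
  assumes "continuous_on (Sig q) psi" and "(\<lambda>n. xi_supnorm q psi n / real n) \<longlonglongrightarrow> 0"
  shows "weak_bounded_variation q psi"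
  unfolding weak_bounded_variation_def
proof (intro exI[of _ "\<lambda>n. exp (xi_supnorm q psi n)"] conjI allI ballI)
  fix n C y w assume "C \<in> cylinders q n" and "y \<in> C" and "w \<in> C"
  then obtain x where "C = cyl q n x"
    by (auto simp: cylinders_def)
  with \<open>y \<in> C\<close> \<open>w \<in> C\<close> have "y \<in> Sig q" and "w \<in> cyl q n y"
    by (auto simp: cyl_def)
  then have "birk psi n y - birk psi n w \<le> xi_supnorm q psi n"
    using birk_diff_le_xi_supnorm[OF assms(1)] abs_le_iff by blast
  then show "exp (birk psi n y - birk psi n w) \<le> exp (xi_supnorm q psi n)"
    by simp
qed (use assms(2) in simp_all)

lemma continuous_on_indicator_cyl:
  "continuous_on (Sig q) (indicator (cyl q n z) :: (nat \<Rightarrow> nat) \<Rightarrow> real)"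
proof -
  have "continuous_on (Sig q) (\<lambda>x. \<Prod>i<n. of_bool (x i = z i) :: real)"
    by (intro continuous_on_prod continuous_on_compose2[OF Topological_Spaces.continuous_on_discrete
          continuous_on_subset[OF continuous_on_product_coordinates]]) auto
  then show ?thesis
    by (rule continuous_on_cong[THEN iffD1, rotated 2]) (auto simp: cyl_def indicator_def)
qed

lemma prefix_in_Sig: "z \<in> Sig q \<Longrightarrow> set (map z [0..<n]) \<subseteq> {1..q}"
  by (simp add: Sig_def image_subset_iff)

lemma prepend_prefix_in_cyl:
  assumes "x \<in> Sig q" and "z \<in> Sig q" and "y \<in> cyl q n z"
  shows "prepend (map z [0..<n]) x \<in> cyl q n y"
proof -
  have "prepend (map z [0..<n]) x \<in> Sig q"
    using assms(1,2) prefix_in_Sig prepend_in_Sig by blast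
  moreover have "prepend (map z [0..<n]) x i = y i" if "i < n" for i
    using assms(3) that by (simp add: prepend_def cyl_def)
  ultimately show ?thesis
    by (simp add: cyl_def)
qed

lemma transfer_iterate_indicator_cyl:
  assumes "z \<in> Sig q" and "x \<in> Sig q"
  shows "((transfer q psi) ^^ n) (indicator (cyl q n z)) x =
    exp (birk psi n (prepend (map z [0..<n]) x))"
proof -
  let ?w = "map z [0..<n]"
  have w_word: "?w \<in> words q n"
    using prefix_in_Sig[OF assms(1)] by simp
  have indicator_prepend: "indicator (cyl q n z) (prepend w x) = (of_bool (w = ?w) :: real)"
    if "w \<in> words q n" for w
  proof -
    have "length w = n"
      using that by simp
    then have "(\<forall>i<n. prepend w x i = z i) \<longleftrightarrow> w = ?w"
      by (simp add: prepend_def list_eq_iff_nth_eq)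
    then show ?thesis
      using that assms(2) prepend_in_Sig[of w q x] by (auto simp: cyl_def indicator_def)
  qed
  have "((transfer q psi) ^^ n) (indicator (cyl q n z)) x =
      (\<Sum>w\<in>words q n. if w = ?w then exp (birk psi n (prepend w x)) else 0)"
    unfolding transfer_iterate_eq_sum[OF assms(2)] by (intro sum.cong) (auto simp: indicator_prepend)
  also have "\<dots> = exp (birk psi n (prepend ?w x))"
    using w_word by (simp add: finite_lists_length_eq)
  finally show ?thesis .
qed

lemma finite_pos_measure_on_measure_Sig_pos:
  "finite_pos_measure_on q \<mu> \<Longrightarrow> measure \<mu> (Sig q) > 0"
  unfolding finite_pos_measure_on_def by (metis finite_measure.emeasure_eq_measure ennreal_less_zero_iff)

lemma
  fixes f :: "(nat \<Rightarrow> nat) \<Rightarrow> real"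
  assumes \<mu>: "finite_pos_measure_on q \<mu>" and f: "continuous_on (Sig q) f"
    and bounds: "\<And>x. x \<in> Sig q \<Longrightarrow> a \<le> f x \<and> f x \<le> b"
  shows integral_ge_const_Sig: "measure \<mu> (Sig q) * a \<le> (\<integral>x. f x \<partial>\<mu>)"
    and integral_le_const_Sig: "(\<integral>x. f x \<partial>\<mu>) \<le> measure \<mu> (Sig q) * b"
proof -
  have space: "space \<mu> = Sig q"
    using \<mu> by (simp add: finite_pos_measure_on_def)
  have integrable_f: "integrable \<mu> f" and integrable_const: "integrable \<mu> (\<lambda>x. c)" for c :: real
    by (intro integrable_continuous_on_Sig[OF \<mu>] f continuous_on_const)+
  have "measure \<mu> (Sig q) * a = (\<integral>x. a \<partial>\<mu>)"
    using space by simp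
  also have "\<dots> \<le> (\<integral>x. f x \<partial>\<mu>)"
    using bounds space by (intro integral_mono[OF integrable_const integrable_f]) auto
  finally show "measure \<mu> (Sig q) * a \<le> (\<integral>x. f x \<partial>\<mu>)" .
  have "(\<integral>x. f x \<partial>\<mu>) \<le> (\<integral>x. b \<partial>\<mu>)"
    using bounds space by (intro integral_mono[OF integrable_f integrable_const]) auto
  also have "\<dots> = measure \<mu> (Sig q) * b"
    using space by simp
  finally show "(\<integral>x. f x \<partial>\<mu>) \<le> measure \<mu> (Sig q) * b" .
qed

lemma conformal_measure_cyl_eq_integral:
  assumes conf: "conformal q psi \<mu>" and psi: "continuous_on (Sig q) psi"
  shows "spectral_radius_transfer q psi ^ n * measure \<mu> (cyl q n z) =
    (\<integral>x. ((transfer q psi) ^^ n) (indicator (cyl q n z)) x \<partial>\<mu>)"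
proof -
  have "space \<mu> = Sig q"
    using conf by (simp add: conformal_def finite_pos_measure_on_def)
  moreover have "cyl q n z \<inter> Sig q = cyl q n z"
    by (auto simp: cyl_def)
  ultimately show ?thesis
    using conformal_integral_transfer_iterate[OF conf psi continuous_on_indicator_cyl] by simp
qed

lemma
  assumes conf: "conformal q psi \<mu>" and psi: "continuous_on (Sig q) psi"
    and z: "z \<in> Sig q" and y: "y \<in> cyl q n z"
  shows conformal_cyl_measure_lower:
      "measure \<mu> (Sig q) * exp (birk psi n y - xi_supnorm q psi n)
        \<le> spectral_radius_transfer q psi ^ n * measure \<mu> (cyl q n z)"
    and conformal_cyl_measure_upper:
      "spectral_radius_transfer q psi ^ n * measure \<mu> (cyl q n z)
        \<le> measure \<mu> (Sig q) * exp (birk psi n y + xi_supnorm q psi n)"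
proof -
  let ?g = "((transfer q psi) ^^ n) (indicator (cyl q n z))"
  have \<mu>: "finite_pos_measure_on q \<mu>"
    using conf by (simp add: conformal_def)
  have g: "continuous_on (Sig q) ?g"
    by (intro continuous_on_transfer_iterate[OF psi] continuous_on_indicator_cyl)
  have g_bounds: "exp (birk psi n y - xi_supnorm q psi n) \<le> ?g x \<and>
      ?g x \<le> exp (birk psi n y + xi_supnorm q psi n)" if x: "x \<in> Sig q" for x
  proof -
    have "prepend (map z [0..<n]) x \<in> cyl q n y"
      by (rule prepend_prefix_in_cyl[OF x z y])
    then have "\<bar>birk psi n y - birk psi n (prepend (map z [0..<n]) x)\<bar> \<le> xi_supnorm q psi n"
      using birk_diff_le_xi_supnorm[OF psi] y by (simp add: cyl_def)
    then show ?thesis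
      by (simp add: transfer_iterate_indicator_cyl[OF z x] abs_le_iff)
  qed
  show "measure \<mu> (Sig q) * exp (birk psi n y - xi_supnorm q psi n)
      \<le> spectral_radius_transfer q psi ^ n * measure \<mu> (cyl q n z)"
    unfolding conformal_measure_cyl_eq_integral[OF conf psi] by (rule integral_ge_const_Sig[OF \<mu> g g_bounds])
  show "spectral_radius_transfer q psi ^ n * measure \<mu> (cyl q n z)
      \<le> measure \<mu> (Sig q) * exp (birk psi n y + xi_supnorm q psi n)"
    unfolding conformal_measure_cyl_eq_integral[OF conf psi] by (rule integral_le_const_Sig[OF \<mu> g g_bounds])
qed

lemma conformal_spectral_radius_pos:
  assumes conf: "conformal q psi \<mu>" and psi: "continuous_on (Sig q) psi"
  shows "spectral_radius_transfer q psi > 0"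
proof -
  have m_pos: "measure \<mu> (Sig q) > 0"
    using conf by (simp add: conformal_def finite_pos_measure_on_measure_Sig_pos)
  then obtain z where z: "z \<in> Sig q"
    by fastforce
  then have "z \<in> cyl q 1 z"
    by (simp add: cyl_def)
  have "0 < measure \<mu> (Sig q) * exp (birk psi 1 z - xi_supnorm q psi 1)"
    using m_pos by simp
  also have "\<dots> \<le> spectral_radius_transfer q psi ^ 1 * measure \<mu> (cyl q 1 z)"
    by (rule conformal_cyl_measure_lower[OF conf psi z \<open>z \<in> cyl q 1 z\<close>])
  finally show ?thesis
    by (simp add: zero_less_mult_iff)
qed

lemma weak_gibbsI:
  fixes c P :: real and X :: "nat \<Rightarrow> real"
  assumes "c > 0" and "(\<lambda>n. X n / real n) \<longlonglongrightarrow> 0"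
    and bounds: "\<And>n x y. x \<in> Sig q \<Longrightarrow> y \<in> cyl q n x \<Longrightarrow>
      c * exp (- X n) \<le> measure \<mu> (cyl q n x) * exp (- birk psi n y + real n * P) \<and>
      measure \<mu> (cyl q n x) * exp (- birk psi n y + real n * P) \<le> c * exp (X n)"
  shows "weak_gibbs q psi \<mu>"
  unfolding weak_gibbs_def
proof (intro exI[of _ P] exI[of _ "\<lambda>n. (c + 1 / c) * exp (X n)"] conjI allI impI)
  have c_plus_inverse_pos: "c + 1 / c > 0"
    using \<open>c > 0\<close> by (intro add_pos_pos) simp_all
  then show "(c + 1 / c) * exp (X n) > 0" for n
    by simp
  have "(\<lambda>n. ln (c + 1 / c) / real n + X n / real n) \<longlonglongrightarrow> 0 + 0"
    by (intro tendsto_add lim_const_over_n assms(2))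
  then show "(\<lambda>n. ln ((c + 1 / c) * exp (X n)) / real n) \<longlonglongrightarrow> 0"
    using c_plus_inverse_pos by (simp add: ln_mult add_divide_distrib)
  fix n x y assume "x \<in> Sig q" and "y \<in> cyl q n x"
  note bounds_n = bounds[OF this]
  have "1 / (c + 1 / c) \<le> c"
    using \<open>c > 0\<close> c_plus_inverse_pos by (simp add: divide_le_eq distrib_left)
  then have "1 / (c + 1 / c) / exp (X n) \<le> c / exp (X n)"
    by (rule divide_right_mono) simp
  then have "1 / ((c + 1 / c) * exp (X n)) \<le> c * exp (- X n)"
    by (simp add: exp_minus divide_inverse)
  then show "1 / ((c + 1 / c) * exp (X n)) \<le> measure \<mu> (cyl q n x) * exp (- birk psi n y + real n * P)"
    using bounds_n by linarith
  have "c * exp (X n) \<le> (c + 1 / c) * exp (X n)"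
    using \<open>c > 0\<close> by simp
  then show "measure \<mu> (cyl q n x) * exp (- birk psi n y + real n * P) \<le> (c + 1 / c) * exp (X n)"
    using bounds_n by linarith
qed

lemma conformal_imp_weak_gibbs:
  assumes conf: "conformal q psi \<mu>" and psi: "continuous_on (Sig q) psi"
    and "(\<lambda>n. xi_supnorm q psi n / real n) \<longlonglongrightarrow> 0"
  shows "weak_gibbs q psi \<mu>"
proof (rule weak_gibbsI[where c = "measure \<mu> (Sig q)" and P = "ln (spectral_radius_transfer q psi)"])
  let ?r = "spectral_radius_transfer q psi"
  fix n x y assume x: "x \<in> Sig q" and y: "y \<in> cyl q n x"
  let ?A = "measure \<mu> (cyl q n x)" and ?B = "birk psi n y" and ?X = "xi_supnorm q psi n"
  have "exp (real n * ln ?r) = ?r ^ n"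
    using conformal_spectral_radius_pos[OF conf psi] by (simp add: exp_of_nat_mult)
  moreover have "exp (- ?B + real n * ln ?r) = exp (real n * ln ?r) / exp ?B"
    by (simp add: exp_diff[symmetric])
  ultimately have gibbs_ratio: "?A * exp (- ?B + real n * ln ?r) = ?r ^ n * ?A / exp ?B"
    by simp
  have "measure \<mu> (Sig q) * exp (- ?X) \<le> ?r ^ n * ?A / exp ?B"
    using conformal_cyl_measure_lower[OF conf psi x y] by (simp add: exp_diff exp_minus field_simps)
  moreover have "?r ^ n * ?A / exp ?B \<le> measure \<mu> (Sig q) * exp ?X"
    using conformal_cyl_measure_upper[OF conf psi x y] by (simp add: exp_add field_simps)
  ultimately show "measure \<mu> (Sig q) * exp (- ?X) \<le> ?A * exp (- ?B + real n * ln ?r) \<and>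
      ?A * exp (- ?B + real n * ln ?r) \<le> measure \<mu> (Sig q) * exp ?X"
    unfolding gibbs_ratio by blast
qed (use assms finite_pos_measure_on_measure_Sig_pos in \<open>simp_all add: conformal_def\<close>)

theorem proposition5:
  fixes q :: nat and psi :: "(nat \<Rightarrow> nat) \<Rightarrow> real"
  assumes "continuous_on (Sig q) psi"
    and "(\<lambda>n. xi_supnorm q psi n / real n) \<longlonglongrightarrow> 0"
  shows "(\<forall>\<mu>. conformal q psi \<mu> \<longrightarrow> weak_gibbs q psi \<mu>) \<and> weak_bounded_variation q psi"
  using conformal_imp_weak_gibbs weak_bounded_variation_if_xi_supnorm_sublinear assms by blast

end
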